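(* Let $\mathcal{E}_1=[\theta_1,u_1]$ and $\mathcal{E}_2=[\theta_2,u_2]$ be interval effect algebras, each generating its ordered linear space, each having an order-determining set of states, and each unrestricted. If two instruments $\mathcal{I},\mathcal{J}$ from $\mathcal{E}_1$ to $\mathcal{E}_2$ coexist, then the observables $\widehat{\mathcal{I}}$ and $\widehat{\mathcal{J}}$ on $\mathcal{E}_1$ coexist.
   Context: Let $V$ be a real vector space with zero $\theta$ and $K\subseteq V$ a positive cone ($\mathbb{R}^+K\subseteq K$, $K+K\subseteq K$, $K\cap(-K)=\{\theta\}$), ordered by $x\le y$ iff $y-x\in K$. For $u\in K$, $u\ne\theta$, the interval effect algebra is $\mathcal{E}=[\theta,u]=\{x\in K: x\le u\}$; for $a,b\in\mathcal{E}$, $a\perp b$ means $a+b\le u$. $\mathcal{E}$ generates $V$ means $K=\mathbb{R}^+\mathcal{E}$ and $V=K-K$. A state is $s\colon\mathcal{E}\to[0,1]$ with $s(u)=1$ and $s(a+b)=s(a)+s(b)$ whenever $a\perp b$; $\mathcal{S}(\mathcal{E})$ is the set of all states. Order-determining: $a\le b$ iff $s(a)\le s(b)$ for all $s\in\mathcal{S}(\mathcal{E})$. Affine = preserves finite convex combinations. Unrestricted: every affine $f\colon\mathcal{S}(\mathcal{E})\to[0,1]$ has the form $f(s)=s(a)$ for some $a\in\mathcal{E}$. A substate is $\lambda s$ with $\lambda\in[0,1]$, $s\in\mathcal{S}(\mathcal{E})$. An operation from $\mathcal{E}_1$ to $\mathcal{E}_2$ is an affine map $\mathcal{I}\colon\mathcal{S}(\mathcal{E}_1)\to\{\text{substates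 on }\mathcal{E}_2\}$; a channel is an operation with values in $\mathcal{S}(\mathcal{E}_2)$. An observable on $\mathcal{E}$ is a finite family $A=\{A_x:x\in\Omega_A\}\subseteq\mathcal{E}$ with $\sum_x A_x=u$. Observables $A,B$ on $\mathcal{E}$ coexist if there is an observable $C=\{C_{xy}:(x,y)\in\Omega_A\times\Omega_B\}$ on $\mathcal{E}$ with $\sum_y C_{xy}=A_x$ for all $x$ and $\sum_x C_{xy}=B_y$ for all $y$. An instrument from $\mathcal{E}_1$ to $\mathcal{E}_2$ is a finite family $\mathcal{I}=\{\mathcal{I}_x:x\in\Omega_{\mathcal{I}}\}$ of operations from $\mathcal{E}_1$ to $\mathcal{E}_2$ such that the pointwise sum $\sum_x\mathcal{I}_x$ is a channel. For such $\mathcal{I}$, $\widehat{\mathcal{I}}_x\in\mathcal{E}_1$ denotes the unique effect with $s(\widehat{\mathcal{I}}_x)=\mathcal{I}_x(s)(u_2)$ for all $s\in\mathcal{S}(\mathcal{E}_1)$, and $\widehat{\mathcal{I}}=\{\widehat{\mathcal{I}}_x:x\in\Omega_{\mathcal{I}}\}$ is an observable on $\mathcal{E}_1$ (the observable measured by $\mathcal{I}$). Instruments $\mathcal{I}$ (outcome space $\Omega_1$) and $\mathcal{J}$ (outcome space $\Omega_2$) from $\mathcal{E}_1$ to $\mathcal{E}_2$ coexist if there is an instrument $\mathcal{K}=\{\mathcal{K}_{xy}:(x,y)\in\Omega_1\times\Omega_2\}$ from $\mathcal{E}_1$ to $\mathcal{E}_2$ with $\sum_{y}\mathcal{K}_{xy}=\mathcal{I}_x$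 for all $x$ and $\sum_x\mathcal{K}_{xy}=\mathcal{J}_y$ for all $y$. *)

theory Defs
  imports Main "HOL-Analysis.Analysis"
begin

text \<open>Positive cone K in a real vector space (the type 'v plays the role of V).\<close>
definition positive_cone :: "'v::real_vector set \<Rightarrow> bool" where
  "positive_cone K \<longleftrightarrow>
     (\<forall>r::real. r \<ge> 0 \<longrightarrow> (\<forall>x\<in>K. r *\<^sub>R x \<in> K)) \<and>
     (\<forall>x\<in>K. \<forall>y\<in>K. x + y \<in> K) \<and>
     K \<inter> uminus ` K = {0}"

definition cone_le :: "'v::real_vector set \<Rightarrow> 'v \<Rightarrow> 'v \<Rightarrow> bool" where
  "cone_le K x y \<longleftrightarrow> y - x \<in> K"

definition effects :: "'v::real_vector set \<Rightarrow> 'v \<Rightarrow> 'v set" where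
  "effects K u = {x \<in> K. cone_le K x u}"

definition interval_EA :: "'v::real_vector set \<Rightarrow> 'v \<Rightarrow> bool" where
  "interval_EA K u \<longleftrightarrow> positive_cone K \<and> u \<in> K \<and> u \<noteq> 0"

definition generates :: "'v::real_vector set \<Rightarrow> 'v \<Rightarrow> bool" where
  "generates K u \<longleftrightarrow>
     K = {r *\<^sub>R a | r a. r \<ge> 0 \<and> a \<in> effects K u} \<and>
     (UNIV :: 'v set) = {x - y | x y. x \<in> K \<and> y \<in> K}"

text \<open>States: functions on E (represented as total functions, extended by 0 outside E).\<close>
definition is_state :: "'v::real_vector set \<Rightarrow> 'v \<Rightarrow> ('v \<Rightarrow> real) \<Rightarrow> bool" where
  "is_state K u s \<longleftrightarrow>
     (\<forall>a\<in>effects K u. 0 \<le> s a \<and> s a \<le> 1) \<and>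
     s u = 1 \<and>
     (\<forall>a\<in>effects K u. \<forall>b\<in>effects K u. cone_le K (a + b) u \<longrightarrow> s (a + b) = s a + s b) \<and>
     (\<forall>x. x \<notin> effects K u \<longrightarrow> s x = 0)"

definition states :: "'v::real_vector set \<Rightarrow> 'v \<Rightarrow> ('v \<Rightarrow> real) set" where
  "states K u = {s. is_state K u s}"

definition order_determining :: "'v::real_vector set \<Rightarrow> 'v \<Rightarrow> bool" where
  "order_determining K u \<longleftrightarrow>
     (\<forall>a\<in>effects K u. \<forall>b\<in>effects K u.
        cone_le K a b \<longleftrightarrow> (\<forall>s\<in>states K u. s a \<le> s b))"

definition affine_real_on :: "('v \<Rightarrow> real) set \<Rightarrow> (('v \<Rightarrow> real) \<Rightarrow> real) \<Rightarrow> bool" where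
  "affine_real_on S f \<longleftrightarrow>
     (\<forall>(I::nat set) c s. finite I \<longrightarrow> (\<forall>i\<in>I. 0 \<le> c i \<and> s i \<in> S) \<longrightarrow> sum c I = 1 \<longrightarrow>
        f (\<lambda>x. \<Sum>i\<in>I. c i * s i x) = (\<Sum>i\<in>I. c i * f (s i)))"

definition affine_fun_on ::
  "('v \<Rightarrow> real) set \<Rightarrow> (('v \<Rightarrow> real) \<Rightarrow> ('w \<Rightarrow> real)) \<Rightarrow> bool" where
  "affine_fun_on S f \<longleftrightarrow>
     (\<forall>(I::nat set) c s. finite I \<longrightarrow> (\<forall>i\<in>I. 0 \<le> c i \<and> s i \<in> S) \<longrightarrow> sum c I = 1 \<longrightarrow>
        f (\<lambda>x. \<Sum>i\<in>I. c i * s i x) = (\<lambda>y. \<Sum>i\<in>I. c i * f (s i) y))"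

definition unrestricted :: "'v::real_vector set \<Rightarrow> 'v \<Rightarrow> bool" where
  "unrestricted K u \<longleftrightarrow>
     (\<forall>f. affine_real_on (states K u) f \<longrightarrow> (\<forall>s\<in>states K u. 0 \<le> f s \<and> f s \<le> 1) \<longrightarrow>
        (\<exists>a\<in>effects K u. \<forall>s\<in>states K u. f s = s a))"

definition substates :: "'v::real_vector set \<Rightarrow> 'v \<Rightarrow> ('v \<Rightarrow> real) set" where
  "substates K u = {(\<lambda>x. l * s x) | l s. 0 \<le> l \<and> l \<le> 1 \<and> s \<in> states K u}"

definition operation ::
  "'v::real_vector set \<Rightarrow> 'v \<Rightarrow> 'w::real_vector set \<Rightarrow> 'w \<Rightarrow>
   (('v \<Rightarrow> real) \<Rightarrow> ('w \<Rightarrow> real)) \<Rightarrow> bool" where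
  "operation K1 u1 K2 u2 T \<longleftrightarrow>
     affine_fun_on (states K1 u1) T \<and> (\<forall>s\<in>states K1 u1. T s \<in> substates K2 u2)"

definition channel ::
  "'v::real_vector set \<Rightarrow> 'v \<Rightarrow> 'w::real_vector set \<Rightarrow> 'w \<Rightarrow>
   (('v \<Rightarrow> real) \<Rightarrow> ('w \<Rightarrow> real)) \<Rightarrow> bool" where
  "channel K1 u1 K2 u2 T \<longleftrightarrow>
     operation K1 u1 K2 u2 T \<and> (\<forall>s\<in>states K1 u1. T s \<in> states K2 u2)"

definition observable :: "'v::real_vector set \<Rightarrow> 'v \<Rightarrow> 'x set \<Rightarrow> ('x \<Rightarrow> 'v) \<Rightarrow> bool" where
  "observable K u \<Omega> A \<longleftrightarrow>
     finite \<Omega> \<and> (\<forall>x\<in>\<Omega>. A x \<in> effects K u) \<and> (\<Sum>x\<in>\<Omega>. A x) = u"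

definition observables_coexist ::
  "'v::real_vector set \<Rightarrow> 'v \<Rightarrow> 'x set \<Rightarrow> ('x \<Rightarrow> 'v) \<Rightarrow> 'y set \<Rightarrow> ('y \<Rightarrow> 'v) \<Rightarrow> bool" where
  "observables_coexist K u \<Omega>A A \<Omega>B B \<longleftrightarrow>
     (\<exists>C. observable K u (\<Omega>A \<times> \<Omega>B) C \<and>
          (\<forall>x\<in>\<Omega>A. (\<Sum>y\<in>\<Omega>B. C (x, y)) = A x) \<and>
          (\<forall>y\<in>\<Omega>B. (\<Sum>x\<in>\<Omega>A. C (x, y)) = B y))"

definition instrument ::
  "'v::real_vector set \<Rightarrow> 'v \<Rightarrow> 'w::real_vector set \<Rightarrow> 'w \<Rightarrow> 'x set \<Rightarrow>
   ('x \<Rightarrow> ('v \<Rightarrow> real) \<Rightarrow> ('w \<Rightarrow> real)) \<Rightarrow> bool" where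
  "instrument K1 u1 K2 u2 \<Omega> I \<longleftrightarrow>
     finite \<Omega> \<and> (\<forall>x\<in>\<Omega>. operation K1 u1 K2 u2 (I x)) \<and>
     channel K1 u1 K2 u2 (\<lambda>s. \<lambda>y. \<Sum>x\<in>\<Omega>. I x s y)"

definition measured_effect ::
  "'v::real_vector set \<Rightarrow> 'v \<Rightarrow> 'w \<Rightarrow> ('x \<Rightarrow> ('v \<Rightarrow> real) \<Rightarrow> ('w \<Rightarrow> real)) \<Rightarrow> 'x \<Rightarrow> 'v" where
  "measured_effect K1 u1 u2 I x =
     (THE a. a \<in> effects K1 u1 \<and> (\<forall>s\<in>states K1 u1. s a = I x s u2))"

definition instruments_coexist ::
  "'v::real_vector set \<Rightarrow> 'v \<Rightarrow> 'w::real_vector set \<Rightarrow> 'w \<Rightarrow>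
   'x set \<Rightarrow> ('x \<Rightarrow> ('v \<Rightarrow> real) \<Rightarrow> ('w \<Rightarrow> real)) \<Rightarrow>
   'y set \<Rightarrow> ('y \<Rightarrow> ('v \<Rightarrow> real) \<Rightarrow> ('w \<Rightarrow> real)) \<Rightarrow> bool" where
  "instruments_coexist K1 u1 K2 u2 \<Omega>1 I \<Omega>2 J \<longleftrightarrow>
     (\<exists>Kr. instrument K1 u1 K2 u2 (\<Omega>1 \<times> \<Omega>2) Kr \<and>
        (\<forall>x\<in>\<Omega>1. \<forall>s\<in>states K1 u1. (\<lambda>w. \<Sum>y\<in>\<Omega>2. Kr (x, y) s w) = I x s) \<and>
        (\<forall>y\<in>\<Omega>2. \<forall>s\<in>states K1 u1. (\<lambda>w. \<Sum>x\<in>\<Omega>1. Kr (x, y) s w) = J y s))"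

end

theory Submission
  imports Defs
begin

text \<open>Let \<open>K\<close> be a joint instrument of \<open>I\<close> and \<open>J\<close> and let \<open>C(x,y)\<close> be the effect
  measured by \<open>K(x,y)\<close>. For every state \<open>s\<close> of \<open>E1\<close>, the sum over \<open>y\<close> of \<open>s(C(x,y))\<close>
  is the total probability of \<open>I(x)(s)\<close>, i.e. \<open>s\<close> evaluated at the effect measured by \<open>I(x)\<close>.
  Because \<open>E1\<close> is unrestricted, a finite family of effects whose state values sum to at
  most 1 has an effect as its sum, and because the states of \<open>E1\<close> are order determining,
  effects with equal state values coincide. Hence the marginals of \<open>C\<close> are the observables
  measured by \<open>I\<close> and \<open>J\<close>, and \<open>C\<close> sums to \<open>u1\<close>.\<close>

lemma state_bounds:
  "s \<in> states K u \<Longrightarrow> a \<in> effects K u \<Longrightarrow> 0 \<le> s a \<and> s a \<le> 1"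
  unfolding states_def is_state_def by blast

lemma state_add:
  "s \<in> states K u \<Longrightarrow> a \<in> effects K u \<Longrightarrow> b \<in> effects K u \<Longrightarrow> cone_le K (a + b) u
   \<Longrightarrow> s (a + b) = s a + s b"
  unfolding states_def is_state_def by blast

lemma state_unit: "s \<in> states K u \<Longrightarrow> s u = 1"
  unfolding states_def is_state_def by blast

lemma affine_real_on_operation_unit:
  assumes "operation K1 u1 K2 u2 T"
  shows "affine_real_on (states K1 u1) (\<lambda>s. T s u2)"
  unfolding affine_real_on_def
proof (intro allI impI)
  fix I :: "nat set" and c :: "nat \<Rightarrow> real" and s
  assume "finite I" "\<forall>i\<in>I. 0 \<le> c i \<and> s i \<in> states K1 u1" "sum c I = 1"
  then have "T (\<lambda>x. \<Sum>i\<in>I. c i * s i x) = (\<lambda>y. \<Sum>i\<in>I. c i * T (s i) y)"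
    using assms unfolding operation_def affine_fun_on_def by blast
  then show "T (\<lambda>x. \<Sum>i\<in>I. c i * s i x) u2 = (\<Sum>i\<in>I. c i * T (s i) u2)"
    by simp
qed

lemma operation_unit_bounds:
  assumes "operation K1 u1 K2 u2 T" and "s \<in> states K1 u1"
  shows "0 \<le> T s u2 \<and> T s u2 \<le> 1"
proof -
  obtain l s' where "T s = (\<lambda>x. l * s' x)" "0 \<le> l" "l \<le> 1" "s' \<in> states K2 u2"
    using assms unfolding operation_def substates_def by blast
  then show ?thesis using state_unit[of s' K2 u2] by simp
qed

locale unrestricted_interval_EA =
  fixes K :: "'v::real_vector set" and u :: 'v
  assumes interval_EA: "interval_EA K u"
    and order_determining: "order_determining K u"
    and unrestricted: "unrestricted K u"
begin

lemma positive_cone: "positive_cone K" and unit_in_cone: "u \<in> K"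
  using interval_EA unfolding interval_EA_def by auto

lemma zero_in_effects: "0 \<in> effects K u"
  using positive_cone unit_in_cone
  unfolding effects_def cone_le_def positive_cone_def by auto

lemma unit_in_effects: "u \<in> effects K u"
  using positive_cone unit_in_cone
  unfolding effects_def cone_le_def positive_cone_def by auto

lemma state_zero:
  assumes "s \<in> states K u"
  shows "s 0 = 0"
proof -
  have "cone_le K (0 + 0) u" using zero_in_effects by (simp add: effects_def)
  then have "s (0 + 0) = s 0 + s 0" using state_add[OF assms] zero_in_effects by blast
  then show ?thesis by simp
qed

lemma effect_eqI:
  assumes a: "a \<in> effects K u" and b: "b \<in> effects K u"
    and eq: "\<forall>s\<in>states K u. s a = s b"
  shows "a = b"
proof -
  have "b - a \<in> K" "a - b \<in> K"
    using order_determining a b eq unfolding order_determining_def cone_le_def by auto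
  then have "b - a \<in> K \<inter> uminus ` K"
    by (metis IntI image_eqI minus_diff_eq)
  then show ?thesis using positive_cone unfolding positive_cone_def by auto
qed

lemma effect_representing:
  assumes "affine_real_on (states K u) f" and "\<forall>s\<in>states K u. 0 \<le> f s \<and> f s \<le> 1"
  shows "\<exists>!a. a \<in> effects K u \<and> (\<forall>s\<in>states K u. s a = f s)"
proof -
  obtain a where a: "a \<in> effects K u" "\<forall>s\<in>states K u. s a = f s"
    using unrestricted assms unfolding unrestricted_def by metis
  show ?thesis
  proof (rule ex1I)
    fix b assume "b \<in> effects K u \<and> (\<forall>s\<in>states K u. s b = f s)"
    then show "b = a" using effect_eqI[of b a] a by simp
  qed (use a in simp)
qed

text \<open>The effect \<open>c\<close> representing \<open>s \<mapsto> s a + s b\<close> dominates \<open>a\<close>, and \<open>c - a\<close> is an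
  effect with the same state values as \<open>b\<close>; hence \<open>c = a + b\<close>.\<close>
lemma add_effects:
  assumes a: "a \<in> effects K u" and b: "b \<in> effects K u"
    and le: "\<forall>s\<in>states K u. s a + s b \<le> 1"
  shows "a + b \<in> effects K u"
proof -
  have "affine_real_on (states K u) (\<lambda>s. s a + s b)"
    unfolding affine_real_on_def by (simp add: sum.distrib distrib_left)
  moreover have "\<forall>s\<in>states K u. 0 \<le> s a + s b \<and> s a + s b \<le> 1"
    using le state_bounds[OF _ a] state_bounds[OF _ b] by force
  ultimately obtain c where c: "c \<in> effects K u" and sc: "\<forall>s\<in>states K u. s c = s a + s b"
    using effect_representing by blast
  have "cone_le K a c"
    using order_determining a c sc state_bounds[OF _ b] unfolding order_determining_def by force
  then have "c - a \<in> K" unfolding cone_le_def .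
  moreover have "u - c \<in> K" "a \<in> K" using c a unfolding effects_def cone_le_def by auto
  then have "(u - c) + a \<in> K" using positive_cone unfolding positive_cone_def by blast
  then have "u - (c - a) \<in> K" by (simp add: algebra_simps)
  ultimately have ca: "c - a \<in> effects K u" unfolding effects_def cone_le_def by blast
  have "cone_le K (a + (c - a)) u" using c unfolding effects_def by simp
  then have "\<forall>s\<in>states K u. s (c - a) = s b" using state_add[OF _ a ca] sc by force
  then have "c - a = b" using effect_eqI[OF ca b] by blast
  then show ?thesis using c by (simp add: algebra_simps)
qed

lemma sum_effects:
  assumes "finite F" and "\<forall>i\<in>F. a i \<in> effects K u"
    and "\<forall>s\<in>states K u. (\<Sum>i\<in>F. s (a i)) \<le> 1"
  shows "sum a F \<in> effects K u \<and> (\<forall>s\<in>states K u. s (sum a F) = (\<Sum>i\<in>F. s (a i)))"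
  using assms
proof (induction F rule: finite_induct)
  case empty
  then show ?case using zero_in_effects state_zero by simp
next
  case (insert i F)
  have ai: "a i \<in> effects K u" using insert.prems by simp
  have "(\<Sum>i\<in>F. s (a i)) \<le> 1" if s: "s \<in> states K u" for s
  proof -
    have "s (a i) + (\<Sum>i\<in>F. s (a i)) \<le> 1" using insert.prems(2) s insert.hyps by simp
    then show ?thesis using state_bounds[OF s ai] by linarith
  qed
  then have F: "sum a F \<in> effects K u" "\<forall>s\<in>states K u. s (sum a F) = (\<Sum>i\<in>F. s (a i))"
    using insert by auto
  have "\<forall>s\<in>states K u. s (a i) + s (sum a F) \<le> 1"
    using F(2) insert.prems(2) insert.hyps by simp
  then have iF: "a i + sum a F \<in> effects K u" using add_effects[OF ai F(1)] by blast
  then have "cone_le K (a i + sum a F) u" unfolding effects_def by simp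
  then show ?case using iF state_add[OF _ ai F(1)] F(2) insert.hyps by simp
qed

lemma sum_effects_eqI:
  assumes "finite F" and "\<forall>i\<in>F. a i \<in> effects K u" and b: "b \<in> effects K u"
    and eq: "\<forall>s\<in>states K u. (\<Sum>i\<in>F. s (a i)) = s b"
  shows "sum a F = b"
proof -
  have "\<forall>s\<in>states K u. (\<Sum>i\<in>F. s (a i)) \<le> 1" using eq state_bounds[OF _ b] by simp
  then have "sum a F \<in> effects K u" "\<forall>s\<in>states K u. s (sum a F) = s b"
    using sum_effects[OF assms(1,2)] eq by auto
  then show ?thesis using effect_eqI b by blast
qed

lemma measured_effect_unique:
  assumes "operation K u K2 u2 T"
  shows "\<exists>!a. a \<in> effects K u \<and> (\<forall>s\<in>states K u. s a = T s u2)"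
proof -
  have "\<forall>s\<in>states K u. 0 \<le> T s u2 \<and> T s u2 \<le> 1"
    using operation_unit_bounds[OF assms] by blast
  then show ?thesis
    using effect_representing[OF affine_real_on_operation_unit[OF assms]] by blast
qed

lemma measured_effect_in_effects:
  "operation K u K2 u2 (T i) \<Longrightarrow> measured_effect K u u2 T i \<in> effects K u"
  unfolding measured_effect_def by (drule measured_effect_unique, drule theI') blast

lemma state_measured_effect:
  "operation K u K2 u2 (T i) \<Longrightarrow> s \<in> states K u \<Longrightarrow> s (measured_effect K u u2 T i) = T i s u2"
  unfolding measured_effect_def by (drule measured_effect_unique, drule theI') blast

lemma sum_measured_effects_eqI:
  assumes "finite F" and "\<forall>i\<in>F. operation K u K2 u2 (T (g i))" and b: "b \<in> effects K u"
    and eq: "\<forall>s\<in>states K u. (\<Sum>i\<in>F. T (g i) s u2) = s b"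
  shows "(\<Sum>i\<in>F. measured_effect K u u2 T (g i)) = b"
proof -
  have "\<forall>s\<in>states K u. (\<Sum>i\<in>F. s (measured_effect K u u2 T (g i))) = s b"
    using state_measured_effect[of K2 u2 T] assms(2) eq by simp
  then show ?thesis
    using sum_effects_eqI[OF assms(1) _ b, of "\<lambda>i. measured_effect K u u2 T (g i)"]
      measured_effect_in_effects[of K2 u2 T] assms(2) by blast
qed

lemma sum_measured_effects_marginal:
  assumes "finite F" and "\<forall>i\<in>F. operation K u K2 u2 (T (g i))"
    and S: "operation K u K2 u2 (S z)"
    and marg: "\<forall>s\<in>states K u. (\<lambda>w. \<Sum>i\<in>F. T (g i) s w) = S z s"
  shows "(\<Sum>i\<in>F. measured_effect K u u2 T (g i)) = measured_effect K u u2 S z"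
proof (rule sum_measured_effects_eqI[where T = T and g = g, OF assms(1,2)])
  show "measured_effect K u u2 S z \<in> effects K u"
    using measured_effect_in_effects[of K2 u2 S z, OF S] .
  show "\<forall>s\<in>states K u. (\<Sum>i\<in>F. T (g i) s u2) = s (measured_effect K u u2 S z)"
    using state_measured_effect[of K2 u2 S z, OF S] marg by (metis (no_types, lifting))
qed

end

theorem lemma3p2:
  fixes K1 :: "'v::real_vector set" and u1 :: 'v
    and K2 :: "'w::real_vector set" and u2 :: 'w
    and \<Omega>1 :: "'x set" and I :: "'x \<Rightarrow> ('v \<Rightarrow> real) \<Rightarrow> ('w \<Rightarrow> real)"
    and \<Omega>2 :: "'y set" and J :: "'y \<Rightarrow> ('v \<Rightarrow> real) \<Rightarrow> ('w \<Rightarrow> real)"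
  assumes "interval_EA K1 u1" and "generates K1 u1"
    and "order_determining K1 u1" and "unrestricted K1 u1"
    and "interval_EA K2 u2" and "generates K2 u2"
    and "order_determining K2 u2" and "unrestricted K2 u2"
    and "instrument K1 u1 K2 u2 \<Omega>1 I" and "instrument K1 u1 K2 u2 \<Omega>2 J"
    and "instruments_coexist K1 u1 K2 u2 \<Omega>1 I \<Omega>2 J"
  shows "observables_coexist K1 u1 \<Omega>1 (measured_effect K1 u1 u2 I)
                                  \<Omega>2 (measured_effect K1 u1 u2 J)"
proof -
  interpret E1: unrestricted_interval_EA K1 u1
    using assms(1,3,4) by unfold_locales
  have fin1: "finite \<Omega>1" and opI: "\<forall>x\<in>\<Omega>1. operation K1 u1 K2 u2 (I x)"
    and fin2: "finite \<Omega>2" and opJ: "\<forall>y\<in>\<Omega>2. operation K1 u1 K2 u2 (J y)"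
    using assms(9,10) unfolding instrument_def by auto
  obtain Kr where Kr: "instrument K1 u1 K2 u2 (\<Omega>1 \<times> \<Omega>2) Kr"
    and margI: "\<forall>x\<in>\<Omega>1. \<forall>s\<in>states K1 u1. (\<lambda>w. \<Sum>y\<in>\<Omega>2. Kr (x, y) s w) = I x s"
    and margJ: "\<forall>y\<in>\<Omega>2. \<forall>s\<in>states K1 u1. (\<lambda>w. \<Sum>x\<in>\<Omega>1. Kr (x, y) s w) = J y s"
    using assms(11) unfolding instruments_coexist_def by blast
  have opKr: "\<forall>p\<in>\<Omega>1 \<times> \<Omega>2. operation K1 u1 K2 u2 (Kr p)"
    and total: "\<forall>s\<in>states K1 u1. (\<lambda>w. \<Sum>p\<in>\<Omega>1 \<times> \<Omega>2. Kr p s w) \<in> states K2 u2"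
    using Kr unfolding instrument_def channel_def by auto
  have "(\<Sum>p\<in>\<Omega>1 \<times> \<Omega>2. Kr p s u2) = s u1" if "s \<in> states K1 u1" for s
    using state_unit[OF total[rule_format, OF that]] state_unit[OF that] by simp
  then have "(\<Sum>p\<in>\<Omega>1 \<times> \<Omega>2. measured_effect K1 u1 u2 Kr p) = u1"
    using E1.sum_measured_effects_eqI[of "\<Omega>1 \<times> \<Omega>2" K2 u2 Kr "\<lambda>p. p" u1]
      fin1 fin2 opKr E1.unit_in_effects by simp
  then have "observable K1 u1 (\<Omega>1 \<times> \<Omega>2) (measured_effect K1 u1 u2 Kr)"
    unfolding observable_def using fin1 fin2 opKr E1.measured_effect_in_effects[of K2 u2 Kr] by blast
  moreover have "(\<Sum>y\<in>\<Omega>2. measured_effect K1 u1 u2 Kr (x, y)) = measured_effect K1 u1 u2 I x"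
    if "x \<in> \<Omega>1" for x
    using E1.sum_measured_effects_marginal[of \<Omega>2 K2 u2 Kr "Pair x" I x] fin2 opKr opI margI that
    by blast
  moreover have "(\<Sum>x\<in>\<Omega>1. measured_effect K1 u1 u2 Kr (x, y)) = measured_effect K1 u1 u2 J y"
    if "y \<in> \<Omega>2" for y
    using E1.sum_measured_effects_marginal[of \<Omega>1 K2 u2 Kr "\<lambda>x. (x, y)" J y] fin1 opKr opJ margJ that
    by blast
  ultimately show ?thesis unfolding observables_coexist_def by blast
qed

end
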